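(* Fix $c>0$, $0\le\alpha\le1$, $t=\lfloor cn^\alpha\rfloor$ with $1\le t\le\frac{n+1}{2}$. With $s=n-4t+2$, $\Delta_n=(n+1)^2+4s$, $\rho_n=\frac{-(s+1)+\sqrt{\Delta_n}}{4t}$, $c_n=2t\rho_n^2+n+1-2t$, $\lambda_m=\frac{n-3+\sqrt{\Delta_n}}{2n}$, $\theta_m=\arccos\lambda_m$, define $\beta_+\in\mathbb{C}^{\mathcal{A}}$ by $$\beta_+(a)=\frac{1}{\sqrt{nc_n}\sin\theta_m}\times\begin{cases}-\rho_n(1+\cos\theta_m),&a\in\mathcal{A}_1,\\ \rho_n(1+\cos\theta_m),&a\in\mathcal{A}_2,\\ \rho_n(1-\cos\theta_m),&a\in\mathcal{A}_3,\\ \rho_n-\cos\theta_m,&a\in\mathcal{A}_4,\\ 1-\rho_n\cos\theta_m,&a\in\mathcal{A}_5,\\ 1-\cos\theta_m,&a\in\mathcal{A}_6.\end{cases}$$ Then the finding probability of $\beta_+$ on the marked edges, $$FP_n=\sum_{a\in\mathcal{M}}\big(|\beta_+(a)|^2+|\beta_+(a^{-1})|^2\big)=\frac{2t\rho_n^2(1+\cos\theta_m)^2}{nc_n\sin^2\theta_m},$$ satisfies $FP_n=1-o(1)$ as $n\to\infty$.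
   Context: Setting. $K_{n+1}$ is the complete graph on the vertex set $V$ with $|V|=n+1$, edge set $E$. The arc set is $\mathcal{A}=\{(x,y): x\ne y\}$; for $a=(x,y)$, $o(a)=x$, $t(a)=y$, $a^{-1}=(y,x)$. A map $\sigma:\mathcal{A}\to\{\pm1\}$ satisfies: $\sigma(a)=-1$ implies $\sigma(a^{-1})=1$. $\mathcal{M}=\{a:\sigma(a)=-1\}$, $\mathcal{M}^{-1}=\{a^{-1}:a\in\mathcal{M}\}$, $\tau(xy)=\sigma((x,y))\sigma((y,x))$, $M=\{e\in E:\tau(e)=-1\}$ (marked edges), assumed to be a $t$-matching (set of $t$ pairwise vertex-disjoint edges), and $\partial M$ is the set of endpoints of edges of $M$. Partition: $\mathcal{A}_1=\mathcal{M}$; $\mathcal{A}_2=\mathcal{M}^{-1}$; $\mathcal{A}_3=\{a\notin\mathcal{M}\cup\mathcal{M}^{-1}: t(a),o(a)\in\partial M\}$; $\mathcal{A}_4=\{a: t(a)\in\partial M,\ o(a)\notin\partial M\}$; $\mathcal{A}_5=\{a: t(a)\notin\partial M,\ o(a)\in\partial M\}$; $\mathcal{A}_6=\{a:t(a),o(a)\notin\partial M\}$. *)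

theory Defs
  imports Complex_Main
begin

definition arcs :: "'v set \<Rightarrow> ('v \<times> 'v) set" where
  "arcs V = {(x, y). x \<in> V \<and> y \<in> V \<and> x \<noteq> y}"

definition rev_arc :: "'v \<times> 'v \<Rightarrow> 'v \<times> 'v" where
  "rev_arc a = (snd a, fst a)"

definition sigma_ok :: "'v set \<Rightarrow> ('v \<times> 'v \<Rightarrow> int) \<Rightarrow> bool" where
  "sigma_ok V \<sigma> \<longleftrightarrow> (\<forall>a \<in> arcs V. (\<sigma> a = 1 \<or> \<sigma> a = -1) \<and>
                       (\<sigma> a = -1 \<longrightarrow> \<sigma> (rev_arc a) = 1))"

definition Mcal :: "'v set \<Rightarrow> ('v \<times> 'v \<Rightarrow> int) \<Rightarrow> ('v \<times> 'v) set" where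
  "Mcal V \<sigma> = {a \<in> arcs V. \<sigma> a = -1}"

definition marked_edges :: "'v set \<Rightarrow> ('v \<times> 'v \<Rightarrow> int) \<Rightarrow> 'v set set" where
  "marked_edges V \<sigma> = {{x, y} | x y. (x, y) \<in> arcs V \<and> \<sigma> (x, y) * \<sigma> (y, x) = -1}"

definition is_t_matching :: "'v set set \<Rightarrow> nat \<Rightarrow> bool" where
  "is_t_matching M t \<longleftrightarrow> finite M \<and> card M = t \<and>
      (\<forall>e \<in> M. \<forall>f \<in> M. e \<noteq> f \<longrightarrow> e \<inter> f = {})"

definition bdry :: "'v set set \<Rightarrow> 'v set" where
  "bdry M = \<Union> M"

text \<open>Index i of the class A_i (i = 1..6) containing an arc a.\<close>
definition arc_class :: "'v set \<Rightarrow> ('v \<times> 'v \<Rightarrow> int) \<Rightarrow> 'v \<times> 'v \<Rightarrow> nat" where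
  "arc_class V \<sigma> a =
     (let B = bdry (marked_edges V \<sigma>) in
      if a \<in> Mcal V \<sigma> then 1
      else if a \<in> rev_arc ` Mcal V \<sigma> then 2
      else if snd a \<in> B \<and> fst a \<in> B then 3
      else if snd a \<in> B \<and> fst a \<notin> B then 4
      else if snd a \<notin> B \<and> fst a \<in> B then 5
      else 6)"

definition s_par :: "nat \<Rightarrow> nat \<Rightarrow> real" where
  "s_par n t = real n - 4 * real t + 2"

definition Delta_par :: "nat \<Rightarrow> nat \<Rightarrow> real" where
  "Delta_par n t = (real n + 1)^2 + 4 * s_par n t"

definition rho_par :: "nat \<Rightarrow> nat \<Rightarrow> real" where
  "rho_par n t = (- (s_par n t + 1) + sqrt (Delta_par n t)) / (4 * real t)"

definition c_par :: "nat \<Rightarrow> nat \<Rightarrow> real" where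
  "c_par n t = 2 * real t * (rho_par n t)^2 + real n + 1 - 2 * real t"

definition lambda_par :: "nat \<Rightarrow> nat \<Rightarrow> real" where
  "lambda_par n t = (real n - 3 + sqrt (Delta_par n t)) / (2 * real n)"

definition theta_par :: "nat \<Rightarrow> nat \<Rightarrow> real" where
  "theta_par n t = arccos (lambda_par n t)"

definition beta_plus :: "'v set \<Rightarrow> ('v \<times> 'v \<Rightarrow> int) \<Rightarrow> nat \<Rightarrow> nat \<Rightarrow> 'v \<times> 'v \<Rightarrow> complex" where
  "beta_plus V \<sigma> n t a =
     (let \<rho> = rho_par n t; \<theta> = theta_par n t;
          k = 1 / (sqrt (real n * c_par n t) * sin \<theta>);
          i = arc_class V \<sigma> a in
      complex_of_real (k *
        (if i = 1 then - \<rho> * (1 + cos \<theta>)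
         else if i = 2 then \<rho> * (1 + cos \<theta>)
         else if i = 3 then \<rho> * (1 - cos \<theta>)
         else if i = 4 then \<rho> - cos \<theta>
         else if i = 5 then 1 - \<rho> * cos \<theta>
         else 1 - cos \<theta>)))"

definition FP :: "'v set \<Rightarrow> ('v \<times> 'v \<Rightarrow> int) \<Rightarrow> nat \<Rightarrow> nat \<Rightarrow> real" where
  "FP V \<sigma> n t = (\<Sum>a \<in> Mcal V \<sigma>. (cmod (beta_plus V \<sigma> n t a))^2
                                 + (cmod (beta_plus V \<sigma> n t (rev_arc a)))^2)"

definition config :: "'v set \<Rightarrow> ('v \<times> 'v \<Rightarrow> int) \<Rightarrow> nat \<Rightarrow> nat \<Rightarrow> bool" where
  "config V \<sigma> n t \<longleftrightarrow> finite V \<and> card V = n + 1 \<and> sigma_ok V \<sigma> \<and>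
                        is_t_matching (marked_edges V \<sigma>) t"

definition t_of :: "real \<Rightarrow> real \<Rightarrow> nat \<Rightarrow> nat" where
  "t_of c \<alpha> n = nat \<lfloor>c * real n powr \<alpha>\<rfloor>"

end

(*
  Each marked edge carries exactly one arc of class A_1 and its reverse, of class A_2, and both
  have amplitude of modulus rho (1 + cos theta) / (sqrt (n c) sin theta); summing over the t
  arcs of Mcal gives the closed form.  For the asymptotics put u = n + 3 + sqrt Delta: since
  Delta = (n + 3)^2 - 16 t, rationalising gives rho = 1 - 4/u and 1 - lambda = 8 t / (n u), so
  the closed form equals rho^2 (1 + lambda) u / (4 c).  From n - 1 <= sqrt Delta < n + 3 each
  of rho, (1 + lambda)/2, u/(2n) and c/n is 1 + O(1/n) uniformly in t, and |FP - 1| <= 12/n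
  for n >= 6, whatever the dependence of t on n.
*)
theory Submission
  imports Defs
begin

definition FP_formula :: "nat \<Rightarrow> nat \<Rightarrow> real" where
  "FP_formula n t = 2 * real t * (rho_par n t)^2 * (1 + cos (theta_par n t))^2
                      / (real n * c_par n t * (sin (theta_par n t))^2)"

lemma rev_arc_Mcal_notin:
  assumes "sigma_ok V \<sigma>" and "a \<in> Mcal V \<sigma>"
  shows "rev_arc a \<notin> Mcal V \<sigma>"
  using assms by (auto simp: sigma_ok_def Mcal_def)

lemma bij_betw_Mcal_marked_edges:
  assumes ok: "sigma_ok V \<sigma>"
  shows "bij_betw (\<lambda>a. {fst a, snd a}) (Mcal V \<sigma>) (marked_edges V \<sigma>)"
proof (rule bij_betw_imageI)
  show "inj_on (\<lambda>a. {fst a, snd a}) (Mcal V \<sigma>)"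
  proof (rule inj_onI)
    fix a b assume a: "a \<in> Mcal V \<sigma>" and b: "b \<in> Mcal V \<sigma>"
      and eq: "{fst a, snd a} = {fst b, snd b}"
    have "rev_arc a \<notin> Mcal V \<sigma>" using rev_arc_Mcal_notin[OF ok a] .
    with eq b show "a = b" by (cases a; cases b) (auto simp: doubleton_eq_iff rev_arc_def)
  qed
  show "(\<lambda>a. {fst a, snd a}) ` Mcal V \<sigma> = marked_edges V \<sigma>"
  proof (intro equalityI subsetI)
    fix e assume "e \<in> (\<lambda>a. {fst a, snd a}) ` Mcal V \<sigma>"
    then obtain x y where xy: "(x, y) \<in> Mcal V \<sigma>" "e = {x, y}" by auto
    hence "\<sigma> (y, x) = 1" using ok by (auto simp: Mcal_def sigma_ok_def rev_arc_def)
    with xy show "e \<in> marked_edges V \<sigma>" unfolding Mcal_def marked_edges_def by force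
  next
    fix e assume "e \<in> marked_edges V \<sigma>"
    then obtain x y where xy: "e = {x, y}" "(x, y) \<in> arcs V" "\<sigma> (x, y) * \<sigma> (y, x) = -1"
      unfolding marked_edges_def by auto
    have yx: "(y, x) \<in> arcs V" using xy(2) by (auto simp: arcs_def)
    have "\<sigma> (x, y) = -1 \<or> \<sigma> (y, x) = -1"
      using ok xy(2,3) yx unfolding sigma_ok_def by fastforce
    hence "(x, y) \<in> Mcal V \<sigma> \<or> (y, x) \<in> Mcal V \<sigma>" using xy(2) yx by (auto simp: Mcal_def)
    moreover have "e = {fst (x, y), snd (x, y)}" "e = {fst (y, x), snd (y, x)}"
      using xy(1) by (simp_all add: insert_commute)
    ultimately show "e \<in> (\<lambda>a. {fst a, snd a}) ` Mcal V \<sigma>" by blast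
  qed
qed

lemma card_Mcal:
  assumes "config V \<sigma> n t"
  shows "card (Mcal V \<sigma>) = t"
proof -
  have ok: "sigma_ok V \<sigma>" and "card (marked_edges V \<sigma>) = t"
    using assms by (simp_all add: config_def is_t_matching_def)
  thus ?thesis using bij_betw_same_card[OF bij_betw_Mcal_marked_edges[OF ok]] by simp
qed

lemma arc_class_Mcal: "a \<in> Mcal V \<sigma> \<Longrightarrow> arc_class V \<sigma> a = 1"
  by (simp add: arc_class_def)

lemma arc_class_rev_arc_Mcal:
  assumes "sigma_ok V \<sigma>" and "a \<in> Mcal V \<sigma>"
  shows "arc_class V \<sigma> (rev_arc a) = 2"
  using rev_arc_Mcal_notin[OF assms] assms(2) by (simp add: arc_class_def)

lemma FP_eq_card_Mcal:
  assumes ok: "sigma_ok V \<sigma>"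
  shows "FP V \<sigma> n t = 2 * card (Mcal V \<sigma>) * (rho_par n t * (1 + cos (theta_par n t))
                        / (sqrt (real n * c_par n t) * sin (theta_par n t)))^2"
proof -
  define w where "w = 1 / (sqrt (real n * c_par n t) * sin (theta_par n t))
                      * (rho_par n t * (1 + cos (theta_par n t)))"
  have "(cmod (beta_plus V \<sigma> n t a))^2 + (cmod (beta_plus V \<sigma> n t (rev_arc a)))^2 = 2 * w^2"
    if "a \<in> Mcal V \<sigma>" for a
  proof -
    have "beta_plus V \<sigma> n t a = complex_of_real (- w)"
      "beta_plus V \<sigma> n t (rev_arc a) = complex_of_real w"
      unfolding beta_plus_def Let_def w_def
      using arc_class_Mcal[OF that] arc_class_rev_arc_Mcal[OF ok that] by simp_all
    thus ?thesis by simp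
  qed
  hence "FP V \<sigma> n t = card (Mcal V \<sigma>) * (2 * w^2)" by (simp add: FP_def)
  thus ?thesis by (simp add: w_def)
qed

lemma c_par_nonneg:
  assumes "2 * t \<le> n + 1"
  shows "0 \<le> c_par n t"
proof -
  have "2 * real t \<le> real n + 1" using assms by linarith
  moreover have "0 \<le> 2 * real t * (rho_par n t)^2" by simp
  ultimately show ?thesis unfolding c_par_def by linarith
qed

lemma FP_eq_FP_formula:
  assumes "config V \<sigma> n t" and "2 * t \<le> n + 1"
  shows "FP V \<sigma> n t = FP_formula n t"
proof -
  have "(sqrt (real n * c_par n t))^2 = real n * c_par n t"
    using c_par_nonneg[OF assms(2)] by simp
  thus ?thesis using assms(1)
    by (simp add: FP_formula_def FP_eq_card_Mcal card_Mcal config_def power_mult_distrib power_divide)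
qed

lemma ratio_close_to_one:
  fixes N r l u c :: real
  assumes N: "N \<ge> 6"
    and r: "(N - 1) / (N + 1) \<le> r" "r \<le> 1"
    and l: "2 * (N - 1) / N \<le> l" "l \<le> 2"
    and u: "2 * N + 2 \<le> u" "u \<le> 2 * N + 6"
    and c: "N - 3 \<le> c" "c \<le> N + 1"
  shows "\<bar>r^2 * l * u / (4 * c) - 1\<bar> \<le> 12 / N"
proof -
  have r0: "0 \<le> r" using r(1) N by (smt (verit) divide_nonneg_nonneg)
  have l0: "0 \<le> l" using l(1) N by (smt (verit) divide_nonneg_nonneg)
  have "r^2 * l * u / (4 * c) \<le> 1 * 2 * (2 * N + 6) / (4 * (N - 3))"
    using r0 r(2) l0 l(2) u c N by (intro frac_le mult_mono) (auto simp: power_le_one)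
  also have "\<dots> \<le> 1 + 12 / N" using N by (simp add: field_simps)
  finally have upper: "r^2 * l * u / (4 * c) \<le> 1 + 12 / N" .
  have "(N - 1)^3 - (N - 12) * (N + 1)^2 = 7 * N^2 + 26 * N + 11"
    by (simp add: power2_eq_square power3_eq_cube algebra_simps)
  hence "(N - 12) * (N + 1)^2 \<le> (N - 1)^3" using N by (smt (verit) zero_le_power2)
  hence "(N - 12) * (N + 1)^2 / (N * (N + 1)^2) \<le> (N - 1)^3 / (N * (N + 1)^2)"
    using N by (intro divide_right_mono) auto
  moreover have "1 - 12 / N = (N - 12) * (N + 1)^2 / (N * (N + 1)^2)"
    using N by (simp add: field_simps)
  ultimately have "1 - 12 / N \<le> (N - 1)^3 / (N * (N + 1)^2)" by simp
  also have "\<dots> = ((N - 1) / (N + 1))^2 * (2 * (N - 1) / N) * (2 * N + 2) / (4 * (N + 1))"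
    using N by (simp add: divide_simps power2_eq_square power3_eq_cube) (simp add: algebra_simps)
  also have "\<dots> \<le> r^2 * l * u / (4 * c)"
    using r l u c N l0 by (intro frac_le mult_mono power_mono) auto
  finally show ?thesis using upper by linarith
qed

lemma Delta_par_eq: "Delta_par n t = (real n + 3)^2 - 16 * real t"
  unfolding Delta_par_def s_par_def by (simp add: power2_eq_square algebra_simps)

text \<open>The conjugate of n + 3 - sqrt Delta: their product is 16 t, which rationalises
  rho and 1 - lambda.\<close>
definition u_par :: "nat \<Rightarrow> nat \<Rightarrow> real" where
  "u_par n t = real n + 3 + sqrt (Delta_par n t)"

context
  fixes n t :: nat
  assumes t_pos: "1 \<le> t" and t_le: "2 * t \<le> n + 1"
begin

lemma n_pos: "1 \<le> n"
  using t_pos t_le by linarith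

lemma Delta_par_lower: "(real n - 1)^2 \<le> Delta_par n t"
  using t_le unfolding Delta_par_eq by (simp add: power2_eq_square algebra_simps)

lemma sqrt_Delta_par_bounds:
  shows "real n - 1 \<le> sqrt (Delta_par n t)" and "sqrt (Delta_par n t) < real n + 3"
proof -
  have "\<bar>real n - 1\<bar> \<le> sqrt (Delta_par n t)"
    using Delta_par_lower real_sqrt_le_mono by fastforce
  thus "real n - 1 \<le> sqrt (Delta_par n t)" by linarith
  have "Delta_par n t < (real n + 3)^2"
    using t_pos unfolding Delta_par_eq by simp
  hence "sqrt (Delta_par n t) < \<bar>real n + 3\<bar>"
    using real_sqrt_less_mono by fastforce
  thus "sqrt (Delta_par n t) < real n + 3" by simp
qed

lemma u_par_bounds: "2 * real n + 2 \<le> u_par n t" "u_par n t \<le> 2 * real n + 6"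
  using sqrt_Delta_par_bounds unfolding u_par_def by linarith+

lemma u_par_pos: "0 < u_par n t"
  using u_par_bounds(1) by linarith

lemma n_plus_3_minus_sqrt_Delta_par: "real n + 3 - sqrt (Delta_par n t) = 16 * real t / u_par n t"
proof -
  have "0 \<le> Delta_par n t"
    using Delta_par_lower by (smt (verit) zero_le_power2)
  hence "(real n + 3 - sqrt (Delta_par n t)) * u_par n t = 16 * real t"
    unfolding u_par_def by (simp add: Delta_par_eq power2_eq_square algebra_simps)
  thus ?thesis using u_par_pos by (subst eq_divide_eq) simp
qed

lemma rho_par_eq: "rho_par n t = 1 - 4 / u_par n t"
proof -
  have "rho_par n t * (4 * real t) = 4 * real t - (real n + 3 - sqrt (Delta_par n t))"
    using t_pos unfolding rho_par_def s_par_def by (simp add: field_simps)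
  also have "\<dots> = 4 * real t - 16 * real t / u_par n t"
    by (simp only: n_plus_3_minus_sqrt_Delta_par)
  also have "\<dots> = (1 - 4 / u_par n t) * (4 * real t)"
    by (simp add: algebra_simps)
  finally show ?thesis using t_pos by simp
qed

lemma one_minus_lambda_par: "1 - lambda_par n t = 8 * real t / (real n * u_par n t)"
proof -
  have "1 - lambda_par n t = (real n + 3 - sqrt (Delta_par n t)) / (2 * real n)"
    using n_pos unfolding lambda_par_def by (simp add: field_simps)
  also have "\<dots> = 16 * real t / u_par n t / (2 * real n)"
    by (simp only: n_plus_3_minus_sqrt_Delta_par)
  finally show ?thesis by simp
qed

lemma rho_par_bounds: "(real n - 1) / (real n + 1) \<le> rho_par n t" "rho_par n t \<le> 1"
proof -
  have "4 / u_par n t \<le> 4 / (2 * real n + 2)"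
    using u_par_bounds(1) n_pos by (intro divide_left_mono) auto
  also have "\<dots> = 1 - (real n - 1) / (real n + 1)"
    by (simp add: field_simps)
  finally show "(real n - 1) / (real n + 1) \<le> rho_par n t" unfolding rho_par_eq by simp
  show "rho_par n t \<le> 1" unfolding rho_par_eq using u_par_pos by simp
qed

lemma rho_par_nonneg: "0 \<le> rho_par n t"
  using rho_par_bounds(1) n_pos by (smt (verit) divide_nonneg_nonneg of_nat_1 of_nat_mono)

lemma one_plus_lambda_par_bounds:
  "2 * (real n - 1) / real n \<le> 1 + lambda_par n t" "1 + lambda_par n t \<le> 2"
proof -
  have eq: "1 + lambda_par n t = (3 * real n - 3 + sqrt (Delta_par n t)) / (2 * real n)"
    using n_pos unfolding lambda_par_def by (simp add: field_simps)
  have "2 * (real n - 1) / real n = (4 * real n - 4) / (2 * real n)"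
    using n_pos by (simp add: field_simps)
  also have "\<dots> \<le> 1 + lambda_par n t"
    unfolding eq using sqrt_Delta_par_bounds(1) by (intro divide_right_mono) auto
  finally show "2 * (real n - 1) / real n \<le> 1 + lambda_par n t" .
  show "1 + lambda_par n t \<le> 2"
    unfolding eq using sqrt_Delta_par_bounds(2) n_pos by (simp add: field_simps)
qed

lemma lambda_par_range: "-1 \<le> lambda_par n t" "lambda_par n t < 1"
proof -
  have "0 \<le> 2 * (real n - 1) / real n" using n_pos by simp
  thus "-1 \<le> lambda_par n t" using one_plus_lambda_par_bounds(1) by linarith
  have "0 < 8 * real t / (real n * u_par n t)" using t_pos n_pos u_par_pos by simp
  thus "lambda_par n t < 1" using one_minus_lambda_par by linarith
qed

lemma cos_theta_par: "cos (theta_par n t) = lambda_par n t"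
  using lambda_par_range unfolding theta_par_def by (simp add: cos_arccos)

lemma sin_theta_par_sq: "(sin (theta_par n t))^2 = 1 - (lambda_par n t)^2"
  using lambda_par_range unfolding theta_par_def by (simp add: sin_arccos abs_square_le_1 abs_le_iff)

lemma c_par_bounds: "real n - 3 \<le> c_par n t" "c_par n t \<le> real n + 1"
proof -
  have "1 - (rho_par n t)^2 = (1 - rho_par n t) * (1 + rho_par n t)"
    by (simp add: power2_eq_square algebra_simps)
  also have "\<dots> \<le> 2 / (real n + 1) * 2"
  proof (rule mult_mono)
    show "1 - rho_par n t \<le> 2 / (real n + 1)"
      using rho_par_bounds(1) by (simp add: field_simps)
  qed (use rho_par_bounds(2) rho_par_nonneg in auto)
  finally have "2 * real t * (1 - (rho_par n t)^2) \<le> (real n + 1) * (4 / (real n + 1))"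
    using t_le rho_par_bounds(2) rho_par_nonneg
    by (intro mult_mono) (auto simp: power_le_one)
  also have "(real n + 1) * (4 / (real n + 1)) = 4"
    by (simp add: field_simps)
  finally have "2 * real t * (1 - (rho_par n t)^2) \<le> 4" .
  thus "real n - 3 \<le> c_par n t" unfolding c_par_def by (simp add: algebra_simps)
  have "(rho_par n t)^2 \<le> 1" using rho_par_bounds(2) rho_par_nonneg by (simp add: power_le_one)
  hence "2 * real t * (rho_par n t)^2 \<le> 2 * real t"
    using mult_left_mono[of _ 1 "2 * real t"] by simp
  thus "c_par n t \<le> real n + 1" unfolding c_par_def by simp
qed

lemma FP_formula_eq_u_par:
  assumes n2: "2 \<le> n" and c_pos: "0 < c_par n t"
  shows "FP_formula n t = (rho_par n t)^2 * (1 + lambda_par n t) * u_par n t / (4 * c_par n t)"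
proof -
  have "0 < 2 * (real n - 1) / real n" using n2 by simp
  hence pos: "0 < 1 + lambda_par n t" using one_plus_lambda_par_bounds(1) by linarith
  have "1 - (lambda_par n t)^2 = (1 - lambda_par n t) * (1 + lambda_par n t)"
    by (simp add: power2_eq_square algebra_simps)
  hence "FP_formula n t = 2 * real t * (rho_par n t)^2 * (1 + lambda_par n t)
                          / (real n * c_par n t * (1 - lambda_par n t))"
    unfolding FP_formula_def cos_theta_par sin_theta_par_sq using pos
    by (simp add: power2_eq_square)
  also have "\<dots> = (rho_par n t)^2 * (1 + lambda_par n t) * u_par n t / (4 * c_par n t)"
    unfolding one_minus_lambda_par using n_pos t_pos u_par_pos c_pos by (simp add: field_simps)
  finally show ?thesis .
qed

lemma FP_formula_estimate:
  assumes "6 \<le> n"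
  shows "\<bar>FP_formula n t - 1\<bar> \<le> 12 / real n"
proof -
  have n2: "2 \<le> n" and c_pos: "0 < c_par n t" using c_par_bounds(1) assms by linarith+
  show ?thesis unfolding FP_formula_eq_u_par[OF n2 c_pos]
    using assms rho_par_bounds one_plus_lambda_par_bounds u_par_bounds c_par_bounds
    by (intro ratio_close_to_one) auto
qed

end

lemma FP_formula_uniformly_close_to_one:
  assumes "0 < \<epsilon>"
  shows "\<exists>N. \<forall>n \<ge> N. \<forall>t. 1 \<le> t \<and> 2 * t \<le> n + 1 \<longrightarrow> \<bar>FP_formula n t - 1\<bar> < \<epsilon>"
proof -
  obtain N :: nat where N: "12 / \<epsilon> < real N" using reals_Archimedean2 by blast
  have "\<bar>FP_formula n t - 1\<bar> < \<epsilon>" if n: "max 6 N \<le> n" and "1 \<le> t" "2 * t \<le> n + 1" for n t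
  proof -
    have "12 / \<epsilon> < real n" using N n by linarith
    hence "12 / real n < \<epsilon>" using n assms by (simp add: divide_less_eq mult.commute)
    moreover have "\<bar>FP_formula n t - 1\<bar> \<le> 12 / real n"
      using FP_formula_estimate that by simp
    ultimately show ?thesis by linarith
  qed
  thus ?thesis by blast
qed

theorem mainTheorem9:
  fixes c \<alpha> :: real
  assumes "c > 0" and "0 \<le> \<alpha>" and "\<alpha> \<le> 1"
  shows "(\<forall>n (V :: 'v set) \<sigma>.
            config V \<sigma> n (t_of c \<alpha> n) \<and> 1 \<le> t_of c \<alpha> n \<and> 2 * t_of c \<alpha> n \<le> n + 1 \<longrightarrow>
            FP V \<sigma> n (t_of c \<alpha> n) =
              2 * real (t_of c \<alpha> n) * (rho_par n (t_of c \<alpha> n))^2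
                * (1 + cos (theta_par n (t_of c \<alpha> n)))^2
              / (real n * c_par n (t_of c \<alpha> n) * (sin (theta_par n (t_of c \<alpha> n)))^2))
       \<and> (\<forall>\<epsilon> > 0. \<exists>N. \<forall>n \<ge> N. \<forall>(V :: 'v set) \<sigma>.
            config V \<sigma> n (t_of c \<alpha> n) \<and> 1 \<le> t_of c \<alpha> n \<and> 2 * t_of c \<alpha> n \<le> n + 1 \<longrightarrow>
            \<bar>FP V \<sigma> n (t_of c \<alpha> n) - 1\<bar> < \<epsilon>)"
proof (unfold FP_formula_def[symmetric], intro conjI allI impI)
  fix n and V :: "'v set" and \<sigma>
  assume "config V \<sigma> n (t_of c \<alpha> n) \<and> 1 \<le> t_of c \<alpha> n \<and> 2 * t_of c \<alpha> n \<le> n + 1"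
  thus "FP V \<sigma> n (t_of c \<alpha> n) = FP_formula n (t_of c \<alpha> n)"
    using FP_eq_FP_formula by blast
next
  fix \<epsilon> :: real assume "\<epsilon> > 0"
  then obtain N where "\<forall>n \<ge> N. \<forall>t. 1 \<le> t \<and> 2 * t \<le> n + 1 \<longrightarrow> \<bar>FP_formula n t - 1\<bar> < \<epsilon>"
    using FP_formula_uniformly_close_to_one by blast
  thus "\<exists>N. \<forall>n \<ge> N. \<forall>(V :: 'v set) \<sigma>.
          config V \<sigma> n (t_of c \<alpha> n) \<and> 1 \<le> t_of c \<alpha> n \<and> 2 * t_of c \<alpha> n \<le> n + 1 \<longrightarrow>
          \<bar>FP V \<sigma> n (t_of c \<alpha> n) - 1\<bar> < \<epsilon>"
    using FP_eq_FP_formula by metis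
qed

end
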